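(* Let $0<\nu<1$, $n\ge2$, and define K-functions as in the context. For the functions (a) $\tilde p_n^{(q)}(\underline{l})=\prod_{i=1}^nq^{(-1)^{l_i}}$ ($q\neq0$), (b) $\tilde p_n^{(N)}(\underline{l})=\big(\sum_{i=1}^n(-1)^{l_i}\big)^N$ ($N\ge0$ an integer), (c) $\tilde p_n^{(\pm)}(\underline{\theta},\underline{l})=\sum_{i=1}^ne^{\mp\theta_i}\sum_{i=1}^ne^{\pm z_i^{(l_i)}}$ with $z_i^{(l)}=\theta_i-\frac{i\pi}{2}(1-(-1)^l\nu)$, the corresponding K-functions satisfy, as $\operatorname{Re}\theta_1\to\infty$ with $\theta_2,\dots,\theta_n$ fixed, writing $\underline{\theta}'=(\theta_2,\dots,\theta_n)$: (a) $\tilde K_n^{(q)}(\underline{\theta})=\tilde K_1^{(q)}(\theta_1)\tilde K_{n-1}^{(q)}(\underline{\theta}')+O(e^{-\operatorname{Re}\theta_1})$; (b) $\tilde K_n^{(N)}(\underline{\theta})=\sum_{K=1}^{N-1}\binom{N}{K}\tilde K_1^{(K)}(\theta_1)\tilde K_{n-1}^{(N-K)}(\underline{\theta}')+O(e^{-\operatorname{Re}\theta_1})$; (c) $\tilde K_n^{\pm}(\underline{\theta})=\pm2i\sin\pi\nu\,\tilde K_{n-1}^{\pm}(\underline{\theta}')+O(e^{-\operatorname{Re}\theta_1})$. In particular $\tilde K_1^{(1)}(\theta)$ is constant and $\tilde K_n^{(1)}(\underline{\theta})=O(e^{-\operatorname{Re}\theta_1})$ for $n>1$.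
   Context: $\theta_{ij}=\theta_i-\theta_j$. For a function $\tilde p_m(\underline{\theta},\underline{l})$, $\underline{l}\in\{0,1\}^m$, its K-function is $$\tilde K_m(\underline{\theta})=\sum_{\underline{l}\in\{0,1\}^m}(-1)^{l_1+\dots+l_m}\prod_{1\le i<j\le m}\Big(1+(l_i-l_j)\frac{i\sin\pi\nu}{\sinh\theta_{ij}}\Big)\tilde p_m(\underline{\theta},\underline{l}).$$ *)

theory Defs
  imports "HOL-Analysis.Analysis" "HOL-Library.Landau_Symbols"
begin

text \<open>Rapidities are functions nat => complex, indexed by 1..m;
 the configurations l range over {0,1}^{1..m} (extensional functions).\<close>

definition Kfun :: "real \<Rightarrow> nat \<Rightarrow> (nat \<Rightarrow> (nat \<Rightarrow> complex) \<Rightarrow> (nat \<Rightarrow> nat) \<Rightarrow> complex)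
                     \<Rightarrow> (nat \<Rightarrow> complex) \<Rightarrow> complex" where
  "Kfun \<nu> m p \<theta> =
     (\<Sum>l\<in>PiE {1..m} (\<lambda>_. {0::nat, 1}).
        (-1) ^ (\<Sum>i\<in>{1..m}. l i) *
        (\<Prod>i\<in>{1..m}. \<Prod>j\<in>{i<..m}.
            1 + of_int (int (l i) - int (l j)) * \<i> * complex_of_real (sin (pi * \<nu>))
                  / sinh (\<theta> i - \<theta> j)) *
        p m \<theta> l)"

definition p_q :: "complex \<Rightarrow> nat \<Rightarrow> (nat \<Rightarrow> complex) \<Rightarrow> (nat \<Rightarrow> nat) \<Rightarrow> complex" where
  "p_q q m \<theta> l = (\<Prod>i\<in>{1..m}. q powi ((-1) ^ l i))"

definition p_N :: "nat \<Rightarrow> nat \<Rightarrow> (nat \<Rightarrow> complex) \<Rightarrow> (nat \<Rightarrow> nat) \<Rightarrow> complex" where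
  "p_N N m \<theta> l = (\<Sum>i\<in>{1..m}. (-1) ^ l i) ^ N"

definition zfun :: "real \<Rightarrow> complex \<Rightarrow> nat \<Rightarrow> complex" where
  "zfun \<nu> t l = t - \<i> * complex_of_real (pi / 2) * (1 - (-1) ^ l * complex_of_real \<nu>)"

text \<open>(c) p^(pm)_m = sum_i e^(-+theta_i) * sum_i e^(+-z_i^(l_i)); the sign pm is s = 1 or s = -1.\<close>
definition p_pm :: "real \<Rightarrow> real \<Rightarrow> nat \<Rightarrow> (nat \<Rightarrow> complex) \<Rightarrow> (nat \<Rightarrow> nat) \<Rightarrow> complex" where
  "p_pm \<nu> s m \<theta> l = (\<Sum>i\<in>{1..m}. exp (- complex_of_real s * \<theta> i)) *
                      (\<Sum>i\<in>{1..m}. exp (complex_of_real s * zfun \<nu> (\<theta> i) (l i)))"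

end

(*
  Identify a configuration l with the set S = {i. l i = 1}.  The K-function is then a signed
  sum over S of the cross products of the factors 1 + c / sinh (theta a - theta b), a in S,
  b not in S, with c = i sin (pi nu).  Split off the index 1.  As Re theta_1 grows, every
  factor involving theta_1 equals 1 -+ 2 c exp (theta_t - theta_1) + O(exp (-2 Re theta_1)), so
  up to O(exp (- Re theta_1)) K_n becomes a sum over subsets T of {2..n} with the weights of
  K_(n-1); the first-order terms only matter where p grows like exp theta_1, as in family (c).
  Contributions that do not depend on T cancel because the weights add up to zero: the K-sum
  of a constant vanishes.  For this identity clear the denominators in w = exp theta: with one
  index a split off, the K-sum times a nonzero factor is a polynomial in w a of degree at most
  2 |B| that vanishes at the 2 |B| + 1 points 0 and +-w b (b in B), the latter by induction.
*)
theory Submission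
  imports Defs "HOL-Computational_Algebra.Polynomial"
begin

section \<open>Decay as the real part tends to infinity\<close>

definition decays :: "nat \<Rightarrow> (complex \<Rightarrow> complex) \<Rightarrow> bool" where
  "decays k h \<longleftrightarrow> (\<exists>C. eventually (\<lambda>x. norm (h x) \<le> C * exp (- Re x) ^ k) (filtercomap Re at_top))"

lemma eventually_Re_ge: "eventually (\<lambda>x. R \<le> Re x) (filtercomap Re at_top)"
  unfolding eventually_filtercomap by (rule exI[of _ "\<lambda>y. R \<le> y"]) simp

lemma decays_iff_nonneg_const:
  "decays k h \<longleftrightarrow> (\<exists>C\<ge>0. eventually (\<lambda>x. norm (h x) \<le> C * exp (- Re x) ^ k) (filtercomap Re at_top))"
proof
  assume "decays k h"
  then obtain C where "eventually (\<lambda>x. norm (h x) \<le> C * exp (- Re x) ^ k) (filtercomap Re at_top)"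
    by (auto simp: decays_def)
  then have "eventually (\<lambda>x. norm (h x) \<le> \<bar>C\<bar> * exp (- Re x) ^ k) (filtercomap Re at_top)"
    by eventually_elim (rule order.trans, assumption, intro mult_right_mono, auto)
  then show "\<exists>C\<ge>0. eventually (\<lambda>x. norm (h x) \<le> C * exp (- Re x) ^ k) (filtercomap Re at_top)"
    by (intro exI[of _ "\<bar>C\<bar>"]) auto
qed (auto simp: decays_def)

lemma decays_cong: "decays k f \<Longrightarrow> (\<And>x. f x = g x) \<Longrightarrow> decays k g"
  by (metis ext)

lemma decays_zero: "decays k (\<lambda>_. 0)"
  unfolding decays_def by (rule exI[of _ 0]) simp

lemma decays_const: "decays 0 (\<lambda>_. c)"
  unfolding decays_def by (rule exI[of _ "norm c"]) simp

lemma decays_exp_minus: "decays 1 (\<lambda>x. exp (- x))"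
  unfolding decays_def by (rule exI[of _ 1]) simp

lemma decays_add:
  assumes "decays k f" "decays k g"
  shows "decays k (\<lambda>x. f x + g x)"
proof -
  from assms obtain C1 C2
    where "eventually (\<lambda>x. norm (f x) \<le> C1 * exp (- Re x) ^ k) (filtercomap Re at_top)"
      and "eventually (\<lambda>x. norm (g x) \<le> C2 * exp (- Re x) ^ k) (filtercomap Re at_top)"
    by (auto simp: decays_def)
  then have "eventually (\<lambda>x. norm (f x + g x) \<le> (C1 + C2) * exp (- Re x) ^ k) (filtercomap Re at_top)"
    by eventually_elim (rule order.trans[OF norm_triangle_ineq], simp add: algebra_simps)
  then show ?thesis by (auto simp: decays_def)
qed

lemma decays_uminus: "decays k f \<Longrightarrow> decays k (\<lambda>x. - f x)"
  by (simp add: decays_def)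

lemma decays_diff: "decays k f \<Longrightarrow> decays k g \<Longrightarrow> decays k (\<lambda>x. f x - g x)"
  using decays_add[of k f "\<lambda>x. - g x"] decays_uminus[of k g] by simp

lemma decays_sum:
  "finite A \<Longrightarrow> (\<And>a. a \<in> A \<Longrightarrow> decays k (h a)) \<Longrightarrow> decays k (\<lambda>x. \<Sum>a\<in>A. h a x)"
  by (induction A rule: finite_induct) (auto intro: decays_add decays_zero)

lemma decays_mult:
  assumes "decays j f" "decays k g"
  shows "decays (j + k) (\<lambda>x. f x * g x)"
proof -
  from assms obtain C1 C2 where C: "C1 \<ge> 0" "C2 \<ge> 0"
    and f: "eventually (\<lambda>x. norm (f x) \<le> C1 * exp (- Re x) ^ j) (filtercomap Re at_top)"
    and g: "eventually (\<lambda>x. norm (g x) \<le> C2 * exp (- Re x) ^ k) (filtercomap Re at_top)"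
    by (auto simp: decays_iff_nonneg_const)
  from f g have "eventually (\<lambda>x. norm (f x * g x) \<le> (C1 * C2) * exp (- Re x) ^ (j + k)) (filtercomap Re at_top)"
  proof eventually_elim
    case (elim x)
    have "norm (f x * g x) \<le> (C1 * exp (- Re x) ^ j) * (C2 * exp (- Re x) ^ k)"
      unfolding norm_mult using elim C by (intro mult_mono) auto
    then show ?case by (simp add: power_add algebra_simps)
  qed
  then show ?thesis by (auto simp: decays_def)
qed

lemma decays_cmult: "decays k f \<Longrightarrow> decays k (\<lambda>x. c * f x)"
  using decays_mult[OF decays_const[of c], of k f] by simp

lemma decays_multc: "decays k f \<Longrightarrow> decays k (\<lambda>x. f x * c)"
  using decays_mult[OF _ decays_const[of c], of k f] by simp

lemma decays_mono:
  assumes "j \<le> k" "decays k f"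
  shows "decays j f"
proof -
  from assms obtain C where C: "C \<ge> 0"
    and "eventually (\<lambda>x. norm (f x) \<le> C * exp (- Re x) ^ k) (filtercomap Re at_top)"
    by (auto simp: decays_iff_nonneg_const)
  from this(2) eventually_Re_ge[of 0]
  have "eventually (\<lambda>x. norm (f x) \<le> C * exp (- Re x) ^ j) (filtercomap Re at_top)"
  proof eventually_elim
    case (elim x)
    have "exp (- Re x) ^ k \<le> exp (- Re x) ^ j"
      using elim assms(1) by (intro power_decreasing) auto
    then show ?case using elim C by (meson mult_left_mono order.trans)
  qed
  then show ?thesis by (auto simp: decays_def)
qed

lemma decays_exp_mult: "decays (Suc k) f \<Longrightarrow> decays k (\<lambda>x. exp x * f x)"
proof -
  assume "decays (Suc k) f"
  then obtain C where "eventually (\<lambda>x. norm (f x) \<le> C * exp (- Re x) ^ Suc k) (filtercomap Re at_top)"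
    by (auto simp: decays_def)
  then have "eventually (\<lambda>x. norm (exp x * f x) \<le> C * exp (- Re x) ^ k) (filtercomap Re at_top)"
  proof eventually_elim
    case (elim x)
    have "norm (exp x * f x) \<le> exp (Re x) * (C * exp (- Re x) ^ Suc k)"
      unfolding norm_mult norm_exp_eq_Re using elim by (intro mult_left_mono) auto
    also have "\<dots> = C * exp (- Re x) ^ k"
      by (simp add: exp_minus field_simps)
    finally show ?case .
  qed
  then show ?thesis by (auto simp: decays_def)
qed

lemma decays_imp_bigo:
  assumes "decays 1 h"
  shows "h \<in> O[filtercomap Re at_top](\<lambda>x. complex_of_real (exp (- Re x)))"
proof -
  from assms obtain C where "eventually (\<lambda>x. norm (h x) \<le> C * exp (- Re x) ^ 1) (filtercomap Re at_top)"
    by (auto simp: decays_def)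
  then show ?thesis by (intro bigoI[of _ C]) simp
qed

text \<open>With \<open>u = exp (y - x)\<close>, \<open>1 / sinh (x - y) = 2 u + 2 u\<^sup>3 / (1 - u\<^sup>2)\<close>.\<close>

lemma decays_inv_sinh: "decays 3 (\<lambda>x. 1 / sinh (x - y) - 2 * exp y * exp (- x))"
proof -
  have "eventually (\<lambda>x. norm (1 / sinh (x - y) - 2 * exp y * exp (- x))
          \<le> (4 * exp (3 * Re y)) * exp (- Re x) ^ 3) (filtercomap Re at_top)"
    using eventually_Re_ge[of "Re y + 1"]
  proof eventually_elim
    case (elim x)
    define u where "u = exp (y - x)"
    have u0: "u \<noteq> 0" by (simp add: u_def)
    have norm_u: "norm u = exp (Re y) * exp (- Re x)"
      by (simp add: u_def exp_add[symmetric])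
    have "exp (- 1 :: real) \<le> 1/2"
      using exp_ge_add_one_self[of 1] by (simp add: exp_minus field_simps)
    moreover have "norm u \<le> exp (- 1)"
      using elim by (simp add: u_def)
    ultimately have "norm u \<le> 1/2" by linarith
    then have "norm (u^2) \<le> 1/4"
      using mult_mono[of "norm u" "1/2" "norm u" "1/2"] by (simp add: norm_mult power2_eq_square)
    then have den: "norm (1 - u^2) \<ge> 3/4"
      using norm_triangle_ineq2[of 1 "u^2"] by (simp add: norm_mult power2_eq_square)
    then have "1 - u^2 \<noteq> 0" by auto
    moreover have "sinh (x - y) = (1 - u^2) / (2 * u)"
      using u0 by (simp add: u_def sinh_def scaleR_conv_of_real exp_diff exp_minus field_simps
          power2_eq_square)
    moreover have "2 * exp y * exp (- x) = 2 * u"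
      by (simp add: u_def exp_diff exp_minus field_simps)
    ultimately have "1 / sinh (x - y) - 2 * exp y * exp (- x) = 2 * u^3 / (1 - u^2)"
      using u0 by (simp only:) (simp add: field_simps power2_eq_square power3_eq_cube)
    also have "norm \<dots> = 2 * norm u ^ 3 / norm (1 - u^2)"
      by (simp add: norm_divide norm_mult norm_power)
    also have "\<dots> \<le> 2 * norm u ^ 3 / (3/4)"
      using den by (intro divide_left_mono) auto
    also have "\<dots> \<le> 4 * exp (3 * Re y) * exp (- Re x) ^ 3"
      unfolding norm_u by (simp add: power_mult_distrib exp_of_nat_mult[symmetric])
    finally show ?case by simp
  qed
  then show ?thesis by (auto simp: decays_def)
qed

lemma decays_inv_sinh_1: "decays 1 (\<lambda>x. 1 / sinh (x - y))"
proof -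
  have "decays 1 (\<lambda>x. (1 / sinh (x - y) - 2 * exp y * exp (- x)) + 2 * exp y * exp (- x))"
    by (intro decays_add decays_mono[OF _ decays_inv_sinh] decays_cmult decays_exp_minus) simp
  then show ?thesis by simp
qed

lemma decays_prod_one_plus:
  assumes "finite T" "\<And>t. t \<in> T \<Longrightarrow> decays 1 (g t)"
  shows "decays 2 (\<lambda>x. (\<Prod>t\<in>T. 1 + g t x) - 1 - (\<Sum>t\<in>T. g t x))"
  using assms
proof (induction T rule: finite_induct)
  case empty
  then show ?case by (simp add: decays_zero)
next
  case (insert t T)
  define E where "E x = (\<Prod>t\<in>T. 1 + g t x) - 1 - (\<Sum>t\<in>T. g t x)" for x
  have E: "decays 2 E"
    unfolding E_def using insert by simp
  have "decays 1 (\<lambda>x. E x + (\<Sum>t\<in>T. g t x))"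
    using insert by (intro decays_add decays_mono[OF _ E] decays_sum) auto
  then have "decays 2 (\<lambda>x. g t x * (E x + (\<Sum>t\<in>T. g t x)))"
    using insert decays_mult[of 1 "g t"] by (simp add: numeral_2_eq_2)
  then have "decays 2 (\<lambda>x. E x + g t x * (E x + (\<Sum>t\<in>T. g t x)))"
    by (intro decays_add E)
  then show ?case
    by (rule decays_cong) (use insert(1,2) in \<open>simp add: E_def algebra_simps\<close>)
qed

definition sinh_prod :: "complex \<Rightarrow> (nat \<Rightarrow> complex) \<Rightarrow> nat set \<Rightarrow> complex \<Rightarrow> complex" where
  "sinh_prod d \<theta> T x = (\<Prod>t\<in>T. 1 + d / sinh (x - \<theta> t))"

lemma decays_sinh_prod:
  assumes "finite T"
  shows "decays 2 (\<lambda>x. sinh_prod d \<theta> T x - 1 - 2 * d * exp (- x) * (\<Sum>t\<in>T. exp (\<theta> t)))"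
proof -
  have "decays 1 (\<lambda>x. d / sinh (x - \<theta> t))" for t
    using decays_cmult[OF decays_inv_sinh_1, of d] by simp
  then have "decays 2 (\<lambda>x. (sinh_prod d \<theta> T x - 1 - (\<Sum>t\<in>T. d / sinh (x - \<theta> t)))
      + (\<Sum>t\<in>T. d * (1 / sinh (x - \<theta> t) - 2 * exp (\<theta> t) * exp (- x))))"
    unfolding sinh_prod_def using assms
    by (intro decays_add decays_prod_one_plus decays_sum decays_cmult
        decays_mono[OF _ decays_inv_sinh]) auto
  then show ?thesis
    by (rule decays_cong) (simp add: sum_distrib_left sum_subtractf algebra_simps)
qed

lemma decays_sinh_prod_mult:
  assumes "finite T" and P: "decays 1 (\<lambda>x. P x - (u * exp x + v))"
  shows "decays 1 (\<lambda>x. sinh_prod d \<theta> T x * P x - (u * exp x + v + 2 * d * u * (\<Sum>t\<in>T. exp (\<theta> t))))"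
proof -
  define \<kappa> where "\<kappa> = 2 * d * (\<Sum>t\<in>T. exp (\<theta> t))"
  define E where "E x = sinh_prod d \<theta> T x - 1 - 2 * d * exp (- x) * (\<Sum>t\<in>T. exp (\<theta> t))" for x
  define r where "r x = P x - (u * exp x + v)" for x
  have E: "decays 2 E"
    unfolding E_def by (rule decays_sinh_prod[OF assms(1)])
  have r: "decays 1 r"
    unfolding r_def by (rule P)
  have vr: "decays 0 (\<lambda>x. v + r x)"
    by (intro decays_add decays_const decays_mono[OF _ r]) simp
  have "decays 1 (\<lambda>x. u * (exp x * E x) + E x * (v + r x) + r x + \<kappa> * exp (- x) * (v + r x))"
  proof (intro decays_add r)
    show "decays 1 (\<lambda>x. u * (exp x * E x))"
      using E by (intro decays_cmult decays_exp_mult) (simp add: numeral_2_eq_2)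
    show "decays 1 (\<lambda>x. E x * (v + r x))"
      using decays_mult[OF decays_mono[OF _ E] vr, of 1] by simp
    show "decays 1 (\<lambda>x. \<kappa> * exp (- x) * (v + r x))"
      using decays_mult[OF decays_cmult[OF decays_exp_minus] vr, of \<kappa>] by simp
  qed
  then show ?thesis
    by (rule decays_cong) (simp add: E_def r_def \<kappa>_def exp_minus field_simps)
qed

section \<open>Signed sums over subsets\<close>

definition cross_prod :: "('a \<Rightarrow> 'a \<Rightarrow> 'b::comm_monoid_mult) \<Rightarrow> 'a set \<Rightarrow> 'a set \<Rightarrow> 'b" where
  "cross_prod f S B = (\<Prod>a\<in>S. \<Prod>b\<in>B - S. f a b)"

definition Ksum :: "('a \<Rightarrow> 'a \<Rightarrow> 'b::comm_ring_1) \<Rightarrow> 'a set \<Rightarrow> ('a set \<Rightarrow> 'b) \<Rightarrow> 'b" where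
  "Ksum f B \<phi> = (\<Sum>S\<in>Pow B. (-1) ^ card S * cross_prod f S B * \<phi> S)"

lemma sum_Pow_insert:
  assumes "finite B" "a \<notin> B"
  shows "(\<Sum>S\<in>Pow (insert a B). g S) = (\<Sum>T\<in>Pow B. g T + g (insert a T))"
proof -
  have "inj_on (insert a) (Pow B)"
    using assms(2) by (intro inj_onI) (metis PowD insert_ident subsetD)
  then have "(\<Sum>S\<in>insert a ` Pow B. g S) = (\<Sum>T\<in>Pow B. g (insert a T))"
    by (rule sum.reindex_cong) auto
  moreover have "(\<Sum>S\<in>Pow (insert a B). g S) = (\<Sum>S\<in>Pow B. g S) + (\<Sum>S\<in>insert a ` Pow B. g S)"
    unfolding Pow_insert using assms by (intro sum.union_disjoint) auto
  ultimately show ?thesis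
    by (simp add: sum.distrib)
qed

lemma cross_prod_insert_outside:
  assumes "finite B" "a \<notin> B" "T \<subseteq> B"
  shows "cross_prod f T (insert a B) = cross_prod f T B * (\<Prod>t\<in>T. f t a)"
proof -
  have "insert a B - T = insert a (B - T)" "a \<notin> B - T"
    using assms by auto
  then show ?thesis
    unfolding cross_prod_def using assms(1) by (simp add: prod.distrib mult.commute)
qed

lemma cross_prod_insert_inside:
  assumes "finite B" "a \<notin> B" "T \<subseteq> B"
  shows "cross_prod f (insert a T) (insert a B) = (\<Prod>b\<in>B - T. f a b) * cross_prod f T B"
proof -
  have "insert a B - insert a T = B - T" "a \<notin> T" "finite T"
    using assms finite_subset by auto
  then show ?thesis
    unfolding cross_prod_def by simp
qed

lemma Ksum_insert:
  assumes "finite B" "a \<notin> B"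
  shows "Ksum f (insert a B) \<phi> = (\<Sum>T\<in>Pow B. (-1) ^ card T * cross_prod f T B *
           ((\<Prod>t\<in>T. f t a) * \<phi> T - (\<Prod>b\<in>B - T. f a b) * \<phi> (insert a T)))"
  unfolding Ksum_def sum_Pow_insert[OF assms]
proof (rule sum.cong[OF refl], goal_cases)
  case (1 T)
  then have "T \<subseteq> B" "finite T" "a \<notin> T"
    using assms finite_subset by auto
  then show ?case
    using assms by (simp add: cross_prod_insert_outside cross_prod_insert_inside algebra_simps)
qed

lemma Ksum_reindex:
  assumes "inj g"
  shows "Ksum f (g ` A) \<phi> = Ksum (\<lambda>a b. f (g a) (g b)) A (\<lambda>S. \<phi> (g ` S))"
proof -
  have "inj_on (image g) (Pow A)"
    using assms by (auto intro: inj_on_image_Pow inj_on_subset)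
  moreover have "cross_prod f (g ` S) (g ` A) = cross_prod (\<lambda>a b. f (g a) (g b)) S A" for S
    unfolding cross_prod_def image_set_diff[OF assms, symmetric]
    using assms by (simp add: prod.reindex inj_on_subset)
  ultimately show ?thesis
    unfolding Ksum_def image_Pow_surj[OF refl, of g A, symmetric]
    using assms by (simp add: sum.reindex card_image inj_on_subset)
qed

section \<open>The K-sum of a constant vanishes\<close>

definition rat_factor :: "'a::field \<Rightarrow> ('i \<Rightarrow> 'a) \<Rightarrow> 'i \<Rightarrow> 'i \<Rightarrow> 'a" where
  "rat_factor c w a b = 1 + 2 * c * w a * w b / (w a ^ 2 - w b ^ 2)"

definition quad :: "'a::comm_ring_1 \<Rightarrow> 'a \<Rightarrow> 'a \<Rightarrow> 'a" where
  "quad c v z = z ^ 2 + 2 * c * v * z - v ^ 2"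

lemma quad_uminus: "quad c v (- z) = quad (- c) v z"
  by (simp add: quad_def)

lemma rat_factor_left_mult_quad:
  assumes "w a ^ 2 \<noteq> w b ^ 2"
  shows "rat_factor c w a b * quad 0 (w a) (w b) = quad (- c) (w a) (w b)"
  using assms by (simp add: rat_factor_def quad_def field_simps)

lemma rat_factor_right_mult_quad:
  assumes "w a ^ 2 \<noteq> w b ^ 2"
  shows "rat_factor c w b a * quad 0 (w a) (w b) = quad c (w a) (w b)"
  using assms by (simp add: rat_factor_def quad_def field_simps)

text \<open>The K-sum over \<open>insert a B\<close> with the denominators involving \<open>a\<close> cleared, as a
  function of \<open>z = w a\<close>.\<close>

definition cross_fun :: "'a::field \<Rightarrow> ('i \<Rightarrow> 'a) \<Rightarrow> 'i set \<Rightarrow> 'a \<Rightarrow> 'a" where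
  "cross_fun c w B z = Ksum (rat_factor c w) B (\<lambda>T.
     (\<Prod>t\<in>T. quad (- c) (w t) z) * (\<Prod>t\<in>B - T. quad 0 (w t) z)
     - (\<Prod>t\<in>B - T. quad c (w t) z) * (\<Prod>t\<in>T. quad 0 (w t) z))"

lemma degree_prod_quad_poly:
  fixes v :: "'i \<Rightarrow> 'a::field"
  assumes "finite T"
  shows "degree (\<Prod>t\<in>T. [: - (v t ^ 2), 2 * d * v t, 1:]) \<le> 2 * card T"
proof -
  have "degree (\<Prod>t\<in>T. [: - (v t ^ 2), 2 * d * v t, 1:])
      \<le> (\<Sum>t\<in>T. degree [: - (v t ^ 2), 2 * d * v t, 1:])"
    by (rule degree_prod_sum_le[OF assms, unfolded comp_def])
  also have "\<dots> \<le> (\<Sum>t\<in>T. 2)"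
    by (intro sum_mono) simp
  finally show ?thesis by simp
qed

lemma cross_fun_is_poly:
  assumes "finite B"
  shows "\<exists>p. degree p \<le> 2 * card B \<and> (\<forall>z. cross_fun c w B z = poly p z)"
proof -
  define q where "q d t = [: - (w t ^ 2), 2 * d * w t, 1:]" for d t
  have poly_q: "poly (q d t) z = quad d (w t) z" for d t z
    by (simp add: q_def quad_def algebra_simps power2_eq_square)
  define p where "p = (\<Sum>T\<in>Pow B. smult ((-1) ^ card T * cross_prod (rat_factor c w) T B)
      (prod (q (- c)) T * prod (q 0) (B - T) - prod (q c) (B - T) * prod (q 0) T))"
  have "degree p \<le> 2 * card B"
    unfolding p_def
  proof (rule degree_sum_le, goal_cases)
    case 1
    show ?case
      using assms by simp
  next
    case (2 T)
    then have fin: "finite T" "finite (B - T)"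
      using assms finite_subset by auto
    have card: "card T + card (B - T) = card B"
      using 2 fin assms by (simp add: card_Diff_subset card_mono)
    have "degree (prod (q d) T * prod (q d') (B - T)) \<le> 2 * card B" for d d'
      using degree_mult_le[of "prod (q d) T" "prod (q d') (B - T)"] card
        degree_prod_quad_poly[OF fin(1), where v = w and d = d]
        degree_prod_quad_poly[OF fin(2), where v = w and d = d']
      unfolding q_def by linarith
    then show ?case
      by (metis (no_types) degree_diff_le degree_smult_le mult.commute order.trans)
  qed
  moreover have "cross_fun c w B z = poly p z" for z
    unfolding cross_fun_def Ksum_def p_def by (simp add: poly_sum poly_prod poly_q)
  ultimately show ?thesis by blast
qed

lemma cross_fun_zero: "cross_fun c w B 0 = 0"
  by (simp add: cross_fun_def Ksum_def quad_def)

text \<open>At \<open>z = \<plusminus> w b\<close> the factor \<open>quad 0 (w b) z\<close> vanishes, which pairs the subsets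
  \<open>U\<close> and \<open>insert b U\<close>.\<close>

lemma cross_fun_split:
  assumes "finite B" "b \<in> B" "z ^ 2 = w b ^ 2" "\<forall>t\<in>B - {b}. w t ^ 2 \<noteq> w b ^ 2"
  shows "cross_fun c w B z = - (\<Sum>U\<in>Pow (B - {b}).
      (-1) ^ card U * cross_prod (rat_factor c w) U (B - {b}) *
      (quad c (w b) z * (\<Prod>u\<in>U. quad (- c) (w u) (w b)) * (\<Prod>t\<in>B - {b} - U. quad c (w t) z)
       + quad (- c) (w b) z * (\<Prod>u\<in>U. quad (- c) (w u) z) * (\<Prod>t\<in>B - {b} - U. quad c (w t) (w b))))"
proof -
  define B' where "B' = B - {b}"
  have B: "B = insert b B'" "b \<notin> B'" "finite B'"
    using assms(1,2) by (auto simp: B'_def)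
  have quad0_b: "quad 0 (w b) z = 0"
    using assms(3) by (simp add: quad_def)
  have quad0_t: "quad 0 (w t) z = quad 0 (w t) (w b)" for t
    using assms(3) by (simp add: quad_def)
  show ?thesis
    unfolding B'_def[symmetric]
    unfolding cross_fun_def Ksum_def B(1) sum_Pow_insert[OF B(3,2)] sum_negf[symmetric]
  proof (rule sum.cong[OF refl], goal_cases)
    case (1 U)
    then have U: "U \<subseteq> B'" "finite U" "b \<notin> U" "finite (B' - U)"
      using B finite_subset by auto
    have diff: "insert b B' - U = insert b (B' - U)" "insert b B' - insert b U = B' - U"
      using U B by auto
    have ne: "w t ^ 2 \<noteq> w b ^ 2" if "t \<in> B'" for t
      using that assms(4) by (simp add: B'_def)
    have left: "(\<Prod>u\<in>U. rat_factor c w u b) * (\<Prod>u\<in>U. quad 0 (w u) z) = (\<Prod>u\<in>U. quad (- c) (w u) (w b))"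
      unfolding prod.distrib[symmetric] quad0_t
      by (rule prod.cong[OF refl]) (use U ne in \<open>auto intro: rat_factor_left_mult_quad\<close>)
    have right: "(\<Prod>t\<in>B' - U. rat_factor c w b t) * (\<Prod>t\<in>B' - U. quad 0 (w t) z)
        = (\<Prod>t\<in>B' - U. quad c (w t) (w b))"
      unfolding prod.distrib[symmetric] quad0_t
      by (rule prod.cong[OF refl]) (use ne in \<open>auto intro: rat_factor_right_mult_quad\<close>)
    have without_b: "(-1) ^ card U * cross_prod (rat_factor c w) U (insert b B') *
        ((\<Prod>t\<in>U. quad (- c) (w t) z) * (\<Prod>t\<in>insert b B' - U. quad 0 (w t) z)
         - (\<Prod>t\<in>insert b B' - U. quad c (w t) z) * (\<Prod>t\<in>U. quad 0 (w t) z))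
      = - ((-1) ^ card U * cross_prod (rat_factor c w) U B' * quad c (w b) z * (\<Prod>t\<in>B' - U. quad c (w t) z)
           * ((\<Prod>u\<in>U. rat_factor c w u b) * (\<Prod>u\<in>U. quad 0 (w u) z)))"
      using U B by (simp add: diff cross_prod_insert_outside quad0_b algebra_simps)
    have with_b: "(-1) ^ card (insert b U) * cross_prod (rat_factor c w) (insert b U) (insert b B') *
        ((\<Prod>t\<in>insert b U. quad (- c) (w t) z) * (\<Prod>t\<in>insert b B' - insert b U. quad 0 (w t) z)
         - (\<Prod>t\<in>insert b B' - insert b U. quad c (w t) z) * (\<Prod>t\<in>insert b U. quad 0 (w t) z))
      = - ((-1) ^ card U * cross_prod (rat_factor c w) U B' * quad (- c) (w b) z * (\<Prod>u\<in>U. quad (- c) (w u) z)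
           * ((\<Prod>t\<in>B' - U. rat_factor c w b t) * (\<Prod>t\<in>B' - U. quad 0 (w t) z)))"
      using U B by (simp add: diff cross_prod_insert_inside quad0_b algebra_simps)
    show ?case
      unfolding without_b with_b left right by (simp add: algebra_simps)
  qed
qed

lemma cross_fun_plus_root:
  assumes "finite B" "b \<in> B" "\<forall>t\<in>B - {b}. w t ^ 2 \<noteq> w b ^ 2"
  shows "cross_fun c w B (w b) = 0"
proof -
  have "quad (- c) (w b) (w b) = - quad c (w b) (w b)"
    by (simp add: quad_def)
  then show ?thesis
    unfolding cross_fun_split[where w = w and b = b and z = "w b", OF assms(1,2) refl assms(3)]
    by simp
qed

lemma cross_fun_minus_root:
  fixes w :: "'i \<Rightarrow> 'a::field"
  assumes "finite B" "b \<in> B" "\<forall>t\<in>B - {b}. w t ^ 2 \<noteq> w b ^ 2"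
  shows "cross_fun c w B (- w b) = 2 * c * w b ^ 2 *
    ((\<Prod>t\<in>B - {b}. quad (- c) (w t) (w b)) - (\<Prod>t\<in>B - {b}. quad c (w t) (w b)))
    * Ksum (rat_factor c w) (B - {b}) (\<lambda>_. 1)"
proof -
  define P where "P d U = (\<Prod>u\<in>U. quad d (w u) (w b))" for d U
  have split: "P d U * P d (B - {b} - U) = P d (B - {b})" if "U \<in> Pow (B - {b})" for d U
    unfolding P_def using that assms(1) by (metis PowD finite_Diff prod.subset_diff mult.commute)
  have sq: "(- w b) ^ 2 = w b ^ 2"
    by simp
  have "quad c (w b) (- w b) = - 2 * c * w b ^ 2" "quad (- c) (w b) (- w b) = 2 * c * w b ^ 2"
    by (simp_all add: quad_def power2_eq_square)
  then have "cross_fun c w B (- w b) = - (\<Sum>U\<in>Pow (B - {b}).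
      (-1) ^ card U * cross_prod (rat_factor c w) U (B - {b}) *
      (- 2 * c * w b ^ 2 * P (- c) U * P (- c) (B - {b} - U) + 2 * c * w b ^ 2 * P c U * P c (B - {b} - U)))"
    unfolding cross_fun_split[where w = w and b = b and z = "- w b", OF assms(1,2) sq assms(3)] P_def
    by (simp add: quad_uminus)
  also have "\<dots> = - (\<Sum>U\<in>Pow (B - {b}).
      (-1) ^ card U * cross_prod (rat_factor c w) U (B - {b}) *
      (- 2 * c * w b ^ 2 * P (- c) (B - {b}) + 2 * c * w b ^ 2 * P c (B - {b})))"
    by (intro arg_cong[where f = uminus] sum.cong refl) (simp add: mult.assoc split)
  also have "\<dots> = - ((\<Sum>U\<in>Pow (B - {b}). (-1) ^ card U * cross_prod (rat_factor c w) U (B - {b}))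
      * (- 2 * c * w b ^ 2 * P (- c) (B - {b}) + 2 * c * w b ^ 2 * P c (B - {b})))"
    by (simp only: sum_distrib_right)
  finally show ?thesis
    unfolding P_def Ksum_def by (simp add: algebra_simps)
qed

lemma card_zero_plus_minus:
  fixes w :: "'i \<Rightarrow> 'a::field_char_0"
  assumes "finite B" "\<forall>b\<in>B. w b \<noteq> 0" "\<forall>a\<in>B. \<forall>b\<in>B. a \<noteq> b \<longrightarrow> w a ^ 2 \<noteq> w b ^ 2"
  shows "card (insert 0 (w ` B \<union> (\<lambda>b. - w b) ` B)) = Suc (2 * card B)"
proof -
  have sq_inj: "a = b" if "a \<in> B" "b \<in> B" "w a ^ 2 = w b ^ 2" for a b
    using that assms(3) by blast
  have "inj_on w B" "inj_on (\<lambda>b. - w b) B"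
    by (auto intro!: inj_onI sq_inj)
  moreover have "w ` B \<inter> (\<lambda>b. - w b) ` B = {}"
  proof safe
    fix a b assume ab: "a \<in> B" "b \<in> B" "w a = - w b"
    then have "a = b"
      by (intro sq_inj) simp_all
    then show "w a \<in> {}"
      using ab assms(2) by (simp add: eq_neg_iff_add_eq_0)
  qed
  moreover have "0 \<notin> w ` B \<union> (\<lambda>b. - w b) ` B"
    using assms(2) by auto
  ultimately show ?thesis
    using assms(1) by (simp add: card_Un_disjoint card_image)
qed

lemma cross_fun_eq_0:
  fixes w :: "'i \<Rightarrow> 'a::field_char_0"
  assumes "finite B" "\<forall>b\<in>B. w b \<noteq> 0" "\<forall>a\<in>B. \<forall>b\<in>B. a \<noteq> b \<longrightarrow> w a ^ 2 \<noteq> w b ^ 2"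
    and IH: "\<And>b. b \<in> B \<Longrightarrow> B - {b} \<noteq> {} \<Longrightarrow> Ksum (rat_factor c w) (B - {b}) (\<lambda>_. 1) = 0"
  shows "cross_fun c w B z = 0"
proof -
  obtain p where deg: "degree p \<le> 2 * card B" and p: "\<And>z. cross_fun c w B z = poly p z"
    using cross_fun_is_poly[OF assms(1)] by blast
  have sep: "\<forall>t\<in>B - {b}. w t ^ 2 \<noteq> w b ^ 2" if "b \<in> B" for b
    using that assms(3) by auto
  define R where "R = insert 0 (w ` B \<union> (\<lambda>b. - w b) ` B)"
  have "poly p x = 0" if "x \<in> R" for x
  proof -
    have "cross_fun c w B (- w b) = 0" if "b \<in> B" for b
    proof (cases "B - {b} = {}")
      case True
      show ?thesis
        unfolding cross_fun_minus_root[OF assms(1) that sep[OF that]] True by simp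
    next
      case False
      then show ?thesis
        unfolding cross_fun_minus_root[OF assms(1) that sep[OF that]] IH[OF that False] by simp
    qed
    then show ?thesis
      using \<open>x \<in> R\<close> cross_fun_zero cross_fun_plus_root[OF assms(1) _ sep]
      unfolding R_def p[symmetric] by auto
  qed
  moreover have "card R = Suc (2 * card B)"
    unfolding R_def by (rule card_zero_plus_minus[OF assms(1-3)])
  ultimately have "p = 0"
    using deg by (intro poly_eqI_degree[of R p 0]) auto
  then show ?thesis
    by (simp add: p)
qed

lemma Ksum_insert_mult_eq_cross_fun:
  assumes "finite B" "a \<notin> B" "\<forall>t\<in>B. w t ^ 2 \<noteq> w a ^ 2"
  shows "Ksum (rat_factor c w) (insert a B) (\<lambda>_. 1) * (\<Prod>t\<in>B. quad 0 (w t) (w a))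
    = cross_fun c w B (w a)"
  unfolding Ksum_insert[OF assms(1,2)]
  unfolding cross_fun_def Ksum_def sum_distrib_right
proof (rule sum.cong[OF refl], goal_cases)
  case (1 T)
  then have T: "T \<subseteq> B" "finite T"
    using assms(1) finite_subset by auto
  have left: "(\<Prod>t\<in>T. rat_factor c w t a) * (\<Prod>t\<in>T. quad 0 (w t) (w a)) = (\<Prod>t\<in>T. quad (- c) (w t) (w a))"
    unfolding prod.distrib[symmetric]
    by (rule prod.cong[OF refl]) (use T assms(3) in \<open>auto intro: rat_factor_left_mult_quad\<close>)
  have right: "(\<Prod>t\<in>B - T. rat_factor c w a t) * (\<Prod>t\<in>B - T. quad 0 (w t) (w a))
      = (\<Prod>t\<in>B - T. quad c (w t) (w a))"
    unfolding prod.distrib[symmetric]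
    by (rule prod.cong[OF refl]) (use assms(3) in \<open>auto intro: rat_factor_right_mult_quad\<close>)
  have split: "(\<Prod>t\<in>B. quad 0 (w t) (w a)) = (\<Prod>t\<in>T. quad 0 (w t) (w a)) * (\<Prod>t\<in>B - T. quad 0 (w t) (w a))"
    using T assms(1) by (metis prod.subset_diff mult.commute)
  show ?case
    unfolding split left[symmetric] right[symmetric] by (simp add: algebra_simps)
qed

theorem Ksum_rat_factor_const_eq_0:
  fixes w :: "'i \<Rightarrow> 'a::field_char_0"
  assumes "finite A" "A \<noteq> {}" "\<forall>a\<in>A. w a \<noteq> 0" "\<forall>a\<in>A. \<forall>b\<in>A. a \<noteq> b \<longrightarrow> w a ^ 2 \<noteq> w b ^ 2"
  shows "Ksum (rat_factor c w) A (\<lambda>_. 1) = 0"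
  using assms
proof (induction A rule: finite_psubset_induct)
  case (psubset A)
  then obtain a where "a \<in> A" by blast
  define B where "B = A - {a}"
  have A: "A = insert a B" "a \<notin> B" "finite B"
    using \<open>a \<in> A\<close> psubset.hyps by (auto simp: B_def)
  have "cross_fun c w B (w a) = 0"
  proof (rule cross_fun_eq_0)
    fix b assume "b \<in> B" "B - {b} \<noteq> {}"
    then show "Ksum (rat_factor c w) (B - {b}) (\<lambda>_. 1) = 0"
      using psubset.prems A by (intro psubset.IH) auto
  qed (use A psubset.prems in auto)
  moreover have "\<forall>t\<in>B. w t ^ 2 \<noteq> w a ^ 2"
    using A psubset.prems by auto
  moreover from this have "(\<Prod>t\<in>B. quad 0 (w t) (w a)) \<noteq> 0"
    using A(3) by (auto simp: quad_def)
  ultimately show ?case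
    unfolding A(1) using Ksum_insert_mult_eq_cross_fun[OF A(3,2)] by (metis mult_eq_0_iff)
qed

section \<open>K-functions as K-sums\<close>

abbreviation coupling :: "real \<Rightarrow> complex" where
  "coupling \<nu> \<equiv> \<i> * complex_of_real (sin (pi * \<nu>))"

definition sinh_factor :: "complex \<Rightarrow> (nat \<Rightarrow> complex) \<Rightarrow> nat \<Rightarrow> nat \<Rightarrow> complex" where
  "sinh_factor c \<theta> a b = 1 + c / sinh (\<theta> a - \<theta> b)"

lemma sinh_diff_eq: "sinh (x - y) = (exp x ^ 2 - exp y ^ 2) / (2 * exp x * exp y)"
  for x y :: complex
  by (simp add: sinh_def scaleR_conv_of_real exp_diff exp_minus field_simps power2_eq_square)

lemma sinh_factor_eq_rat_factor: "sinh_factor c \<theta> = rat_factor c (\<lambda>t. exp (\<theta> t))"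
  by (intro ext) (simp add: sinh_factor_def rat_factor_def sinh_diff_eq mult.assoc)

lemma exp_sq_neq_if_sinh_diff_neq_0: "sinh (x - y) \<noteq> 0 \<Longrightarrow> exp x ^ 2 \<noteq> exp y ^ 2"
  for x y :: complex
  by (simp add: sinh_diff_eq)

definition Kweight :: "complex \<Rightarrow> (nat \<Rightarrow> complex) \<Rightarrow> nat set \<Rightarrow> nat set \<Rightarrow> complex" where
  "Kweight c \<theta> B T = (-1) ^ card T * cross_prod (sinh_factor c \<theta>) T B"

lemma sum_Kweight_eq_0:
  assumes "finite B" "B \<noteq> {}" "\<forall>a\<in>B. \<forall>b\<in>B. a \<noteq> b \<longrightarrow> sinh (\<theta> a - \<theta> b) \<noteq> 0"
  shows "(\<Sum>T\<in>Pow B. Kweight c \<theta> B T) = 0"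
proof -
  have "\<forall>a\<in>B. \<forall>b\<in>B. a \<noteq> b \<longrightarrow> exp (\<theta> a) ^ 2 \<noteq> exp (\<theta> b) ^ 2"
    using assms(3) exp_sq_neq_if_sinh_diff_neq_0 by blast
  then have "Ksum (rat_factor c (\<lambda>t. exp (\<theta> t))) B (\<lambda>_. 1) = 0"
    using assms(1,2) by (intro Ksum_rat_factor_const_eq_0) auto
  then show ?thesis
    by (simp add: Ksum_def Kweight_def sinh_factor_eq_rat_factor)
qed

lemma prod_ordered_pairs_cross:
  fixes g :: "'a::linorder \<Rightarrow> 'a \<Rightarrow> 'b::comm_monoid_mult"
  assumes "finite A" "S \<subseteq> A"
    and "\<And>i j. i \<in> A \<Longrightarrow> j \<in> A \<Longrightarrow> i < j \<Longrightarrow> (i \<in> S) = (j \<in> S) \<Longrightarrow> g i j = 1"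
  shows "(\<Prod>(i, j)\<in>{(i, j). i \<in> A \<and> j \<in> A \<and> i < j}. g i j)
    = (\<Prod>(a, b)\<in>S \<times> (A - S). g (min a b) (max a b))"
proof -
  define h where "h = (\<lambda>(a, b). (min a b, max a b :: 'a))"
  have "(\<Prod>(i, j)\<in>{(i, j). i \<in> A \<and> j \<in> A \<and> i < j}. g i j) = (\<Prod>(i, j)\<in>h ` (S \<times> (A - S)). g i j)"
  proof (rule prod.mono_neutral_right)
    show "finite {(i, j). i \<in> A \<and> j \<in> A \<and> i < j}"
      by (rule finite_subset[of _ "A \<times> A"]) (use assms(1) in auto)
    show "h ` (S \<times> (A - S)) \<subseteq> {(i, j). i \<in> A \<and> j \<in> A \<and> i < j}"
      using assms(2) by (auto simp: h_def min_def max_def less_le not_le split: if_splits)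
    show "\<forall>p\<in>{(i, j). i \<in> A \<and> j \<in> A \<and> i < j} - h ` (S \<times> (A - S)). (case p of (i, j) \<Rightarrow> g i j) = 1"
    proof (clarify, rule assms(3))
      fix i j assume ij: "i \<in> A" "j \<in> A" "i < j" "(i, j) \<notin> h ` (S \<times> (A - S))"
      show "(i \<in> S) = (j \<in> S)"
      proof (rule ccontr)
        assume "(i \<in> S) \<noteq> (j \<in> S)"
        then have "(i, j) = h (i, j) \<and> (i, j) \<in> S \<times> (A - S) \<or> (i, j) = h (j, i) \<and> (j, i) \<in> S \<times> (A - S)"
          using ij by (auto simp: h_def)
        then show False
          using ij(4) by blast
      qed
    qed
  qed
  also have "\<dots> = (\<Prod>(a, b)\<in>S \<times> (A - S). g (min a b) (max a b))"
    by (subst prod.reindex) (auto simp: h_def case_prod_unfold min_def max_def inj_on_def split: if_splits)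
  finally show ?thesis .
qed

lemma prod_pairs_indicator:
  assumes "S \<subseteq> {1..m}"
  shows "(\<Prod>i\<in>{1..m}. \<Prod>j\<in>{i<..m}.
           1 + of_int (int (indicator S i) - int (indicator S j)) * c / sinh (\<theta> i - \<theta> j))
       = cross_prod (sinh_factor c \<theta>) S {1..m}"
proof -
  define g where "g i j = 1 + of_int (int (indicator S i) - int (indicator S j)) * c / sinh (\<theta> i - \<theta> j)"
    for i j :: nat
  have "Sigma {1..m} (\<lambda>i. {i<..m}) = {(i, j). i \<in> {1..m} \<and> j \<in> {1..m} \<and> i < j}"
    by auto
  then have "(\<Prod>i\<in>{1..m}. \<Prod>j\<in>{i<..m}. g i j) = (\<Prod>(i, j)\<in>{(i, j). i \<in> {1..m} \<and> j \<in> {1..m} \<and> i < j}. g i j)"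
    by (simp add: prod.Sigma)
  also have "\<dots> = (\<Prod>(a, b)\<in>S \<times> ({1..m} - S). g (min a b) (max a b))"
    by (rule prod_ordered_pairs_cross) (use assms in \<open>auto simp: g_def indicator_def\<close>)
  also have "\<dots> = (\<Prod>(a, b)\<in>S \<times> ({1..m} - S). sinh_factor c \<theta> a b)"
  proof (rule prod.cong[OF refl], clarify)
    fix a b assume "a \<in> S" "b \<in> {1..m}" "b \<notin> S"
    moreover have "sinh (\<theta> b - \<theta> a) = - sinh (\<theta> a - \<theta> b)"
      by (metis minus_diff_eq sinh_minus)
    ultimately show "g (min a b) (max a b) = sinh_factor c \<theta> a b"
      by (cases "a < b") (auto simp: g_def sinh_factor_def min_def max_def)
  qed
  also have "\<dots> = cross_prod (sinh_factor c \<theta>) S {1..m}"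
    unfolding cross_prod_def using assms finite_subset by (subst prod.Sigma) auto
  finally show ?thesis
    unfolding g_def .
qed

definition local_family :: "(nat \<Rightarrow> (nat \<Rightarrow> complex) \<Rightarrow> (nat \<Rightarrow> nat) \<Rightarrow> complex) \<Rightarrow> bool" where
  "local_family p \<longleftrightarrow> (\<forall>m \<theta> l l'. (\<forall>i\<in>{1..m}. l i = l' i) \<longrightarrow> p m \<theta> l = p m \<theta> l')"

lemma Kfun_eq_Ksum:
  assumes "local_family p"
  shows "Kfun \<nu> m p \<theta> = Ksum (sinh_factor (coupling \<nu>) \<theta>) {1..m} (\<lambda>S. p m \<theta> (indicator S))"
  unfolding Kfun_def Ksum_def
proof (rule sum.reindex_bij_witness[where j = "\<lambda>l. {i\<in>{1..m}. l i = 1}"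
      and i = "\<lambda>S. restrict (indicator S) {1..m}"])
  fix l assume l: "l \<in> PiE {1..m} (\<lambda>_. {0::nat, 1})"
  define S where "S = {i\<in>{1..m}. l i = 1}"
  have agree: "l i = indicator S i" if "i \<in> {1..m}" for i
    using l that by (auto simp: S_def PiE_iff indicator_def)
  show "restrict (indicator S) {1..m} = l"
    using l agree by (auto simp: PiE_iff extensional_def)
  have S: "S \<subseteq> {1..m}"
    by (auto simp: S_def)
  then show "S \<in> Pow {1..m}"
    by simp
  have "(\<Sum>i\<in>{1..m}. l i) = (\<Sum>i\<in>{1..m}. indicator S i)"
    using agree by (rule sum.cong[OF refl])
  also have "\<dots> = card S"
    using S by (simp add: sum_indicator_eq_card Int_absorb1)
  finally have "(\<Sum>i\<in>{1..m}. l i) = card S" .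
  moreover have "p m \<theta> (indicator S) = p m \<theta> l"
    using assms agree unfolding local_family_def by metis
  moreover have "(\<Prod>i\<in>{1..m}. \<Prod>j\<in>{i<..m}. 1 + of_int (int (l i) - int (l j)) * \<i>
        * complex_of_real (sin (pi * \<nu>)) / sinh (\<theta> i - \<theta> j))
      = cross_prod (sinh_factor (coupling \<nu>) \<theta>) S {1..m}"
    unfolding prod_pairs_indicator[symmetric, OF S]
    by (intro prod.cong refl) (auto simp: agree mult.assoc)
  ultimately show "(-1) ^ card S * cross_prod (sinh_factor (coupling \<nu>) \<theta>) S {1..m} * p m \<theta> (indicator S)
      = (-1) ^ (\<Sum>i\<in>{1..m}. l i) * (\<Prod>i\<in>{1..m}. \<Prod>j\<in>{i<..m}. 1 + of_int (int (l i) - int (l j)) * \<i>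
        * complex_of_real (sin (pi * \<nu>)) / sinh (\<theta> i - \<theta> j)) * p m \<theta> l"
    by simp
next
  fix S assume "S \<in> Pow {1..m}"
  then show "{i\<in>{1..m}. restrict (indicator S) {1..m} i = 1} = S"
    by (auto simp: indicator_def)
  show "restrict (indicator S) {1..m} \<in> PiE {1..m} (\<lambda>_. {0::nat, 1})"
    by (auto simp: indicator_def)
qed

section \<open>Splitting off the first rapidity\<close>

lemma atLeast1_eq_insert_2: "n \<ge> 2 \<Longrightarrow> {1..n} = insert 1 {2..n::nat}"
  by auto

lemma atLeast2_eq_image_Suc: "n \<ge> 2 \<Longrightarrow> {2..n} = Suc ` {1..n - 1}"
  by (simp add: image_Suc_atLeastAtMost)

lemma prod_shift_2:
  assumes "n \<ge> 2"
  shows "(\<Prod>i\<in>{1..n - 1}. g (Suc i)) = (\<Prod>i\<in>{2..n}. g i)"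
  unfolding atLeast2_eq_image_Suc[OF assms] by (simp add: prod.reindex del: image_Suc_atLeastAtMost)

lemma sum_shift_2:
  assumes "n \<ge> 2"
  shows "(\<Sum>i\<in>{1..n - 1}. g (Suc i)) = (\<Sum>i\<in>{2..n}. g i)"
  unfolding atLeast2_eq_image_Suc[OF assms] by (simp add: sum.reindex del: image_Suc_atLeastAtMost)

lemma Kfun_update_first:
  assumes "n \<ge> 2" "local_family p"
  shows "Kfun \<nu> n p (\<theta>(1 := x)) = (\<Sum>T\<in>Pow {2..n}. Kweight (coupling \<nu>) \<theta> {2..n} T *
     (sinh_prod (- coupling \<nu>) \<theta> T x * p n (\<theta>(1 := x)) (indicator T)
      - sinh_prod (coupling \<nu>) \<theta> ({2..n} - T) x * p n (\<theta>(1 := x)) (indicator (insert 1 T))))"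
proof -
  let ?f = "sinh_factor (coupling \<nu>) (\<theta>(1 := x))"
  have "Kfun \<nu> n p (\<theta>(1 := x)) = Ksum ?f (insert 1 {2..n}) (\<lambda>S. p n (\<theta>(1 := x)) (indicator S))"
    unfolding Kfun_eq_Ksum[OF assms(2)] atLeast1_eq_insert_2[OF assms(1)] ..
  also have "\<dots> = (\<Sum>T\<in>Pow {2..n}. (-1) ^ card T * cross_prod ?f T {2..n} *
      ((\<Prod>t\<in>T. ?f t 1) * p n (\<theta>(1 := x)) (indicator T)
       - (\<Prod>b\<in>{2..n} - T. ?f 1 b) * p n (\<theta>(1 := x)) (indicator (insert 1 T))))"
    by (rule Ksum_insert) auto
  also have "\<dots> = (\<Sum>T\<in>Pow {2..n}. Kweight (coupling \<nu>) \<theta> {2..n} T *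
     (sinh_prod (- coupling \<nu>) \<theta> T x * p n (\<theta>(1 := x)) (indicator T)
      - sinh_prod (coupling \<nu>) \<theta> ({2..n} - T) x * p n (\<theta>(1 := x)) (indicator (insert 1 T))))"
  proof (rule sum.cong[OF refl], goal_cases)
    case (1 T)
    then have T: "T \<subseteq> {2..n}"
      by simp
    have "cross_prod ?f T {2..n} = cross_prod (sinh_factor (coupling \<nu>) \<theta>) T {2..n}"
      unfolding cross_prod_def using T by (intro prod.cong refl) (auto simp: sinh_factor_def)
    moreover have "(\<Prod>t\<in>T. ?f t 1) = sinh_prod (- coupling \<nu>) \<theta> T x"
      unfolding sinh_prod_def
    proof (rule prod.cong[OF refl])
      fix t assume "t \<in> T"
      then have "t \<noteq> 1"
        using T by auto
      moreover have "sinh (\<theta> t - x) = - sinh (x - \<theta> t)"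
        by (metis minus_diff_eq sinh_minus)
      ultimately show "?f t 1 = 1 + - coupling \<nu> / sinh (x - \<theta> t)"
        by (simp add: sinh_factor_def)
    qed
    moreover have "(\<Prod>b\<in>{2..n} - T. ?f 1 b) = sinh_prod (coupling \<nu>) \<theta> ({2..n} - T) x"
      unfolding sinh_prod_def sinh_factor_def by (intro prod.cong refl) auto
    ultimately show ?case
      by (simp add: Kweight_def)
  qed
  finally show ?thesis .
qed

lemma Kfun_shift:
  assumes "n \<ge> 2" "local_family p"
  shows "Kfun \<nu> (n - 1) p (\<lambda>i. \<theta> (i + 1)) = (\<Sum>T\<in>Pow {2..n}. Kweight (coupling \<nu>) \<theta> {2..n} T *
     p (n - 1) (\<lambda>i. \<theta> (i + 1)) (\<lambda>i. indicator T (Suc i)))"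
proof -
  let ?\<phi> = "\<lambda>T. p (n - 1) (\<lambda>i. \<theta> (i + 1)) (\<lambda>i. indicator T (Suc i))"
  have "Ksum (sinh_factor (coupling \<nu>) \<theta>) {2..n} ?\<phi>
      = Ksum (\<lambda>a b. sinh_factor (coupling \<nu>) \<theta> (Suc a) (Suc b)) {1..n - 1} (\<lambda>S. ?\<phi> (Suc ` S))"
    unfolding atLeast2_eq_image_Suc[OF assms(1)] by (rule Ksum_reindex[OF inj_Suc])
  also have "(\<lambda>a b. sinh_factor (coupling \<nu>) \<theta> (Suc a) (Suc b)) = sinh_factor (coupling \<nu>) (\<lambda>i. \<theta> (i + 1))"
    by (simp add: sinh_factor_def fun_eq_iff)
  also have "(\<lambda>S. ?\<phi> (Suc ` S)) = (\<lambda>S. p (n - 1) (\<lambda>i. \<theta> (i + 1)) (indicator S))"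
  proof -
    have "(\<lambda>i. indicator (Suc ` S) (Suc i)) = (indicator S :: nat \<Rightarrow> nat)" for S
      by (auto simp: indicator_def)
    then show ?thesis
      by simp
  qed
  finally show ?thesis
    by (simp add: Kfun_eq_Ksum[OF assms(2)] Ksum_def Kweight_def)
qed

lemma Kfun_one:
  assumes "local_family p"
  shows "Kfun \<nu> 1 p \<theta> = p 1 \<theta> (indicator {}) - p 1 \<theta> (indicator {1})"
proof -
  have "Kfun \<nu> 1 p \<theta> = Ksum (sinh_factor (coupling \<nu>) \<theta>) (insert 1 {}) (\<lambda>S. p 1 \<theta> (indicator S))"
    by (simp add: Kfun_eq_Ksum[OF assms])
  then show ?thesis
    by (simp add: Ksum_insert cross_prod_def)
qed

lemma sum_Kweight_eq_0_ordered:
  assumes "n \<ge> 2" "\<And>i j. 2 \<le> i \<Longrightarrow> i < j \<Longrightarrow> j \<le> n \<Longrightarrow> sinh (\<theta> i - \<theta> j) \<noteq> 0"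
  shows "(\<Sum>T\<in>Pow {2..n}. Kweight c \<theta> {2..n} T) = 0"
proof (rule sum_Kweight_eq_0)
  show "\<forall>a\<in>{2..n}. \<forall>b\<in>{2..n}. a \<noteq> b \<longrightarrow> sinh (\<theta> a - \<theta> b) \<noteq> 0"
  proof (intro ballI impI)
    fix a b assume ab: "a \<in> {2..n}" "b \<in> {2..n}" "a \<noteq> b"
    have "sinh (\<theta> b - \<theta> a) = - sinh (\<theta> a - \<theta> b)"
      by (metis minus_diff_eq sinh_minus)
    then show "sinh (\<theta> a - \<theta> b) \<noteq> 0"
      using ab assms(2)[of a b] assms(2)[of b a] by (cases "a < b") auto
  qed
qed (use assms(1) in auto)

text \<open>A part \<open>u exp x\<close> of a configuration value combines with the first-order correction
  \<open>\<mp> 2 c exp (\<theta> t - x)\<close> of the cross factors involving \<open>x\<close> into a constant.\<close>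

lemma decays_Kfun_update_first:
  fixes u0 u1 v0 v1 :: "nat set \<Rightarrow> complex"
  assumes "n \<ge> 2" "local_family p"
    and "\<And>T. T \<subseteq> {2..n} \<Longrightarrow> decays 1 (\<lambda>x. p n (\<theta>(1 := x)) (indicator T) - (u0 T * exp x + v0 T))"
    and "\<And>T. T \<subseteq> {2..n} \<Longrightarrow>
      decays 1 (\<lambda>x. p n (\<theta>(1 := x)) (indicator (insert 1 T)) - (u1 T * exp x + v1 T))"
  shows "decays 1 (\<lambda>x. Kfun \<nu> n p (\<theta>(1 := x)) - (\<Sum>T\<in>Pow {2..n}. Kweight (coupling \<nu>) \<theta> {2..n} T *
      ((u0 T - u1 T) * exp x + v0 T - v1 T
       - 2 * coupling \<nu> * (u0 T * (\<Sum>t\<in>T. exp (\<theta> t)) + u1 T * (\<Sum>t\<in>{2..n} - T. exp (\<theta> t))))))"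
proof -
  let ?c = "coupling \<nu>" and ?B = "{2..n}"
  have "decays 1 (\<lambda>x. (sinh_prod (- ?c) \<theta> T x * p n (\<theta>(1 := x)) (indicator T)
        - (u0 T * exp x + v0 T + 2 * (- ?c) * u0 T * (\<Sum>t\<in>T. exp (\<theta> t))))
       - (sinh_prod ?c \<theta> (?B - T) x * p n (\<theta>(1 := x)) (indicator (insert 1 T))
        - (u1 T * exp x + v1 T + 2 * ?c * u1 T * (\<Sum>t\<in>?B - T. exp (\<theta> t)))))"
    if "T \<subseteq> ?B" for T
    by (rule decays_diff; rule decays_sinh_prod_mult) (use that assms(3,4) in \<open>auto intro: finite_subset\<close>)
  then have "decays 1 (\<lambda>x. \<Sum>T\<in>Pow ?B. Kweight ?c \<theta> ?B T *
      ((sinh_prod (- ?c) \<theta> T x * p n (\<theta>(1 := x)) (indicator T)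
        - (u0 T * exp x + v0 T + 2 * (- ?c) * u0 T * (\<Sum>t\<in>T. exp (\<theta> t))))
       - (sinh_prod ?c \<theta> (?B - T) x * p n (\<theta>(1 := x)) (indicator (insert 1 T))
        - (u1 T * exp x + v1 T + 2 * ?c * u1 T * (\<Sum>t\<in>?B - T. exp (\<theta> t))))))"
    by (intro decays_sum decays_cmult) auto
  then show ?thesis
  proof (rule decays_cong, goal_cases)
    case (1 x)
    show ?case
      unfolding Kfun_update_first[OF assms(1,2)] sum_subtractf[symmetric]
      by (intro sum.cong refl) (simp add: algebra_simps)
  qed
qed

lemma decays_Kfun_update_first_const:
  assumes "n \<ge> 2" "local_family p"
    and "\<And>T x. T \<subseteq> {2..n} \<Longrightarrow> p n (\<theta>(1 := x)) (indicator T) = v0 T"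
    and "\<And>T x. T \<subseteq> {2..n} \<Longrightarrow> p n (\<theta>(1 := x)) (indicator (insert 1 T)) = v1 T"
  shows "decays 1 (\<lambda>x. Kfun \<nu> n p (\<theta>(1 := x))
    - (\<Sum>T\<in>Pow {2..n}. Kweight (coupling \<nu>) \<theta> {2..n} T * (v0 T - v1 T)))"
proof -
  have "decays 1 (\<lambda>x. Kfun \<nu> n p (\<theta>(1 := x)) - (\<Sum>T\<in>Pow {2..n}. Kweight (coupling \<nu>) \<theta> {2..n} T *
      ((0 - 0) * exp x + v0 T - v1 T
       - 2 * coupling \<nu> * (0 * (\<Sum>t\<in>T. exp (\<theta> t)) + 0 * (\<Sum>t\<in>{2..n} - T. exp (\<theta> t))))))"
    by (rule decays_Kfun_update_first[OF assms(1,2)]) (simp_all add: assms(3,4)[simplified] decays_zero)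
  then show ?thesis
    by (rule decays_cong) simp
qed

section \<open>The three families\<close>

lemma sum_mult_affine:
  fixes w f g :: "'a \<Rightarrow> 'b::comm_ring_1"
  assumes "sum w A = 0" "\<And>x. x \<in> A \<Longrightarrow> f x = c + g x"
  shows "(\<Sum>x\<in>A. w x * f x) = (\<Sum>x\<in>A. w x * g x)"
proof -
  have "(\<Sum>x\<in>A. w x * f x) = (\<Sum>x\<in>A. w x * c) + (\<Sum>x\<in>A. w x * g x)"
    using assms(2) by (simp add: distrib_left sum.distrib)
  also have "(\<Sum>x\<in>A. w x * c) = sum w A * c"
    by (simp add: sum_distrib_right)
  finally show ?thesis
    using assms(1) by simp
qed

lemma sum_mult_binomial_diff:
  fixes w y :: "'a \<Rightarrow> 'b::comm_ring_1"
  assumes "sum w A = 0"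
  shows "(\<Sum>x\<in>A. w x * ((1 + y x) ^ N - (- 1 + y x) ^ N))
    = (\<Sum>k\<in>{1..N - 1}. of_nat (N choose k) * (1 - (- 1) ^ k) * (\<Sum>x\<in>A. w x * y x ^ (N - k)))"
proof -
  have binomial: "(1 + z) ^ N - (- 1 + z) ^ N = (\<Sum>k\<le>N. of_nat (N choose k) * (1 - (- 1) ^ k) * z ^ (N - k))"
    for z :: 'b
    unfolding binomial_ring sum_subtractf[symmetric] by (intro sum.cong refl) (simp add: algebra_simps)
  have "(\<Sum>x\<in>A. w x * ((1 + y x) ^ N - (- 1 + y x) ^ N))
      = (\<Sum>x\<in>A. \<Sum>k\<le>N. of_nat (N choose k) * (1 - (- 1) ^ k) * (w x * y x ^ (N - k)))"
    unfolding binomial sum_distrib_left by (intro sum.cong refl) (simp add: algebra_simps)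
  also have "\<dots> = (\<Sum>k\<le>N. of_nat (N choose k) * (1 - (- 1) ^ k) * (\<Sum>x\<in>A. w x * y x ^ (N - k)))"
    by (subst sum.swap) (simp only: sum_distrib_left)
  also have "\<dots> = (\<Sum>k\<in>{1..N - 1}. of_nat (N choose k) * (1 - (- 1) ^ k) * (\<Sum>x\<in>A. w x * y x ^ (N - k)))"
  proof (rule sum.mono_neutral_right)
    show "\<forall>k\<in>{..N} - {1..N - 1}.
        of_nat (N choose k) * (1 - (- 1) ^ k) * (\<Sum>x\<in>A. w x * y x ^ (N - k)) = 0"
    proof
      fix k assume "k \<in> {..N} - {1..N - 1}"
      then have "k = 0 \<or> k = N"
        by auto
      then show "of_nat (N choose k) * (1 - (- 1) ^ k) * (\<Sum>x\<in>A. w x * y x ^ (N - k)) = 0"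
        using assms by auto
    qed
  qed auto
  finally show ?thesis .
qed

lemma sum_mult_indicator_split:
  fixes f :: "nat \<Rightarrow> 'a::comm_ring_1"
  assumes "finite B" "T \<subseteq> B"
  shows "(\<Sum>i\<in>B. f i * g (indicator T i)) = g 1 * (\<Sum>i\<in>T. f i) + g 0 * (\<Sum>i\<in>B - T. f i)"
proof -
  have "(\<Sum>i\<in>B. f i * g (indicator T i)) = (\<Sum>i\<in>B - T. f i * g (indicator T i)) + (\<Sum>i\<in>T. f i * g (indicator T i))"
    by (rule sum.subset_diff[OF assms(2,1)])
  also have "\<dots> = g 0 * (\<Sum>i\<in>B - T. f i) + g 1 * (\<Sum>i\<in>T. f i)"
    by (simp add: sum_distrib_left mult.commute)
  finally show ?thesis
    by simp
qed

lemma local_family_p_q: "local_family (p_q q)"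
  unfolding local_family_def p_q_def by auto

lemma decays_Kfun_p_q:
  assumes "n \<ge> 2"
  shows "decays 1 (\<lambda>x. Kfun \<nu> n (p_q q) (\<theta>(1 := x))
    - Kfun \<nu> 1 (p_q q) (\<theta>(1 := x)) * Kfun \<nu> (n - 1) (p_q q) (\<lambda>i. \<theta> (i + 1)))"
proof -
  define P where "P T = (\<Prod>i\<in>{2..n}. q powi ((-1) ^ indicator T i))" for T :: "nat set"
  have first: "p_q q n \<theta>' l = q powi ((-1) ^ l 1) * (\<Prod>i\<in>{2..n}. q powi ((-1) ^ l i))" for \<theta>' l
    unfolding p_q_def atLeast1_eq_insert_2[OF assms] by simp
  have p0: "p_q q n \<theta>' (indicator T) = q * P T" if "T \<subseteq> {2..n}" for \<theta>' T
  proof -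
    have "1 \<notin> T"
      using that by auto
    then show ?thesis
      by (simp add: first P_def)
  qed
  have p1: "p_q q n \<theta>' (indicator (insert 1 T)) = inverse q * P T" if "T \<subseteq> {2..n}" for \<theta>' T
    unfolding first P_def by (auto simp: power_int_minus indicator_def intro!: prod.cong)
  have shift: "p_q q (n - 1) \<theta>' (\<lambda>i. indicator T (Suc i)) = P T" for \<theta>' T
    unfolding p_q_def P_def using prod_shift_2[OF assms] by simp
  have K1: "Kfun \<nu> 1 (p_q q) \<theta>' = q - inverse q" for \<theta>'
    unfolding Kfun_one[OF local_family_p_q] by (simp add: p_q_def power_int_minus)
  have "decays 1 (\<lambda>x. Kfun \<nu> n (p_q q) (\<theta>(1 := x))
      - (\<Sum>T\<in>Pow {2..n}. Kweight (coupling \<nu>) \<theta> {2..n} T * (q * P T - inverse q * P T)))"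
    by (rule decays_Kfun_update_first_const[OF assms local_family_p_q p0 p1])
  then show ?thesis
    unfolding K1 Kfun_shift[OF assms local_family_p_q] shift
    by (rule decays_cong) (simp add: sum_distrib_left algebra_simps)
qed

lemma local_family_p_N: "local_family (p_N N)"
  unfolding local_family_def p_N_def by auto

lemma Kfun_one_p_N: "Kfun \<nu> 1 (p_N k) \<theta> = 1 - (-1) ^ k"
  unfolding Kfun_one[OF local_family_p_N] by (simp add: p_N_def)

lemma decays_Kfun_p_N:
  assumes "n \<ge> 2" "\<And>i j. 2 \<le> i \<Longrightarrow> i < j \<Longrightarrow> j \<le> n \<Longrightarrow> sinh (\<theta> i - \<theta> j) \<noteq> 0"
  shows "decays 1 (\<lambda>x. Kfun \<nu> n (p_N N) (\<theta>(1 := x))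
    - (\<Sum>k\<in>{1..N - 1}. of_nat (N choose k) * Kfun \<nu> 1 (p_N k) (\<theta>(1 := x))
        * Kfun \<nu> (n - 1) (p_N (N - k)) (\<lambda>i. \<theta> (i + 1))))"
proof -
  define y where "y T = (\<Sum>i\<in>{2..n}. (-1::complex) ^ indicator T i)" for T :: "nat set"
  have first: "p_N k n \<theta>' l = ((-1) ^ l 1 + (\<Sum>i\<in>{2..n}. (-1) ^ l i)) ^ k" for k \<theta>' l
    unfolding p_N_def atLeast1_eq_insert_2[OF assms(1)] by simp
  have p0: "p_N N n \<theta>' (indicator T) = (1 + y T) ^ N" if "T \<subseteq> {2..n}" for \<theta>' T
  proof -
    have "1 \<notin> T"
      using that by auto
    then show ?thesis
      by (simp add: first y_def)
  qed
  have p1: "p_N N n \<theta>' (indicator (insert 1 T)) = (- 1 + y T) ^ N" if "T \<subseteq> {2..n}" for \<theta>' T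
    unfolding first y_def by (auto simp: indicator_def intro!: sum.cong arg_cong[where f = "\<lambda>z. (- 1 + z) ^ N"])
  have shift: "p_N k (n - 1) \<theta>' (\<lambda>i. indicator T (Suc i)) = y T ^ k" for k \<theta>' T
    unfolding p_N_def y_def sum_shift_2[OF assms(1), of "\<lambda>i. (-1) ^ indicator T i"] ..
  have "decays 1 (\<lambda>x. Kfun \<nu> n (p_N N) (\<theta>(1 := x))
      - (\<Sum>T\<in>Pow {2..n}. Kweight (coupling \<nu>) \<theta> {2..n} T * ((1 + y T) ^ N - (- 1 + y T) ^ N)))"
    by (rule decays_Kfun_update_first_const[OF assms(1) local_family_p_N p0 p1])
  moreover have "(\<Sum>T\<in>Pow {2..n}. Kweight (coupling \<nu>) \<theta> {2..n} T * ((1 + y T) ^ N - (- 1 + y T) ^ N))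
      = (\<Sum>k\<in>{1..N - 1}. of_nat (N choose k) * (1 - (- 1) ^ k)
          * (\<Sum>T\<in>Pow {2..n}. Kweight (coupling \<nu>) \<theta> {2..n} T * y T ^ (N - k)))"
    by (rule sum_mult_binomial_diff) (rule sum_Kweight_eq_0_ordered[OF assms])
  ultimately show ?thesis
    unfolding Kfun_one_p_N Kfun_shift[OF assms(1) local_family_p_N] shift by (simp add: mult.assoc)
qed

definition phase :: "real \<Rightarrow> real \<Rightarrow> nat \<Rightarrow> complex" where
  "phase \<nu> s l = exp (- (complex_of_real s * (\<i> * complex_of_real (pi / 2) * (1 - (-1) ^ l * complex_of_real \<nu>))))"

lemma exp_zfun: "exp (complex_of_real s * zfun \<nu> t l) = exp (complex_of_real s * t) * phase \<nu> s l"
  by (simp add: zfun_def phase_def algebra_simps flip: exp_add)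

lemma local_family_p_pm: "local_family (p_pm \<nu> s)"
  unfolding local_family_def p_pm_def by auto

lemma p_pm_update_first:
  assumes "n \<ge> 2"
  shows "p_pm \<nu> s n (\<theta>(1 := x)) l
    = (exp (- complex_of_real s * x) + (\<Sum>i\<in>{2..n}. exp (- complex_of_real s * \<theta> i)))
      * (exp (complex_of_real s * x) * phase \<nu> s (l 1) + (\<Sum>i\<in>{2..n}. exp (complex_of_real s * \<theta> i) * phase \<nu> s (l i)))"
  unfolding p_pm_def atLeast1_eq_insert_2[OF assms] by (simp add: exp_zfun)

lemma p_pm_shift:
  assumes "n \<ge> 2"
  shows "p_pm \<nu> s (n - 1) (\<lambda>i. \<theta> (i + 1)) (\<lambda>i. l (Suc i))
    = (\<Sum>i\<in>{2..n}. exp (- complex_of_real s * \<theta> i)) * (\<Sum>i\<in>{2..n}. exp (complex_of_real s * \<theta> i) * phase \<nu> s (l i))"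
  unfolding p_pm_def exp_zfun Suc_eq_plus1[symmetric]
    sum_shift_2[OF assms, of "\<lambda>i. exp (- complex_of_real s * \<theta> i)"]
    sum_shift_2[OF assms, of "\<lambda>i. exp (complex_of_real s * \<theta> i) * phase \<nu> s (l i)"] ..

lemma decays_exp_product_remainder:
  shows "decays 1 (\<lambda>x. (exp (- x) + a) * (exp x * \<Omega> + b) - (a * \<Omega> * exp x + (\<Omega> + a * b)))"
    and "decays 1 (\<lambda>x. (exp x + a) * (exp (- x) * \<Omega> + b) - (b * exp x + (\<Omega> + a * b)))"
  using decays_multc[OF decays_exp_minus, of b] decays_cmult[OF decays_exp_minus, of "a * \<Omega>"]
  by (auto elim!: decays_cong simp: exp_minus field_simps)

lemma decays_Kfun_p_pm_plus:
  assumes "n \<ge> 2" "\<And>i j. 2 \<le> i \<Longrightarrow> i < j \<Longrightarrow> j \<le> n \<Longrightarrow> sinh (\<theta> i - \<theta> j) \<noteq> 0"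
  shows "decays 1 (\<lambda>x. Kfun \<nu> n (p_pm \<nu> 1) (\<theta>(1 := x))
    - complex_of_real 1 * 2 * \<i> * complex_of_real (sin (pi * \<nu>)) * Kfun \<nu> (n - 1) (p_pm \<nu> 1) (\<lambda>i. \<theta> (i + 1)))"
proof -
  let ?w = "Kweight (coupling \<nu>) \<theta> {2..n}" and ?c = "coupling \<nu>"
  define \<alpha> where "\<alpha> = (\<Sum>i\<in>{2..n}. exp (- \<theta> i))"
  define \<beta> where "\<beta> T = (\<Sum>i\<in>{2..n}. exp (\<theta> i) * phase \<nu> 1 (indicator T i))" for T :: "nat set"
  define E where "E T = (\<Sum>t\<in>T. exp (\<theta> t))" for T :: "nat set"
  define R where "R T x = (\<alpha> * phase \<nu> 1 0 - \<alpha> * phase \<nu> 1 1) * exp x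
      + (phase \<nu> 1 0 + \<alpha> * \<beta> T) - (phase \<nu> 1 1 + \<alpha> * \<beta> T)
      - 2 * ?c * (\<alpha> * phase \<nu> 1 0 * E T + \<alpha> * phase \<nu> 1 1 * E ({2..n} - T))" for T x
  have p: "p_pm \<nu> 1 n (\<theta>(1 := x)) (indicator S) = (exp (- x) + \<alpha>) * (exp x * phase \<nu> 1 (indicator S 1) + \<beta> S)"
    for S x
    unfolding p_pm_update_first[OF assms(1)] \<alpha>_def \<beta>_def by simp
  have \<beta>_insert: "\<beta> (insert 1 T) = \<beta> T" for T
    unfolding \<beta>_def by (intro sum.cong refl) (auto simp: indicator_def)
  have "decays 1 (\<lambda>x. Kfun \<nu> n (p_pm \<nu> 1) (\<theta>(1 := x)) - (\<Sum>T\<in>Pow {2..n}. ?w T * R T x))"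
    unfolding R_def E_def
  proof (rule decays_Kfun_update_first[OF assms(1) local_family_p_pm])
    fix T assume "T \<subseteq> {2..n}"
    then have "indicator T 1 = (0::nat)"
      by (auto simp: indicator_def)
    then show "decays 1 (\<lambda>x. p_pm \<nu> 1 n (\<theta>(1 := x)) (indicator T) - (\<alpha> * phase \<nu> 1 0 * exp x + (phase \<nu> 1 0 + \<alpha> * \<beta> T)))"
      unfolding p by (simp only: decays_exp_product_remainder)
    have "indicator (insert 1 T) 1 = (1::nat)"
      by simp
    then show "decays 1 (\<lambda>x. p_pm \<nu> 1 n (\<theta>(1 := x)) (indicator (insert 1 T)) - (\<alpha> * phase \<nu> 1 1 * exp x + (phase \<nu> 1 1 + \<alpha> * \<beta> T)))"
      unfolding p \<beta>_insert by (simp only: decays_exp_product_remainder)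
  qed
  moreover have "(\<Sum>T\<in>Pow {2..n}. ?w T * R T x) = (\<Sum>T\<in>Pow {2..n}. ?w T * (2 * ?c * (\<alpha> * \<beta> T)))" for x
  proof (rule sum_mult_affine[OF sum_Kweight_eq_0_ordered[OF assms]])
    fix T assume T: "T \<in> Pow {2..n}"
    have "\<beta> T = phase \<nu> 1 1 * E T + phase \<nu> 1 0 * E ({2..n} - T)"
      unfolding \<beta>_def E_def by (rule sum_mult_indicator_split) (use T in auto)
    moreover have "E {2..n} = E T + E ({2..n} - T)"
      unfolding E_def using T by (simp add: sum.subset_diff)
    ultimately show "R T x = ((\<alpha> * phase \<nu> 1 0 - \<alpha> * phase \<nu> 1 1) * exp x + phase \<nu> 1 0 - phase \<nu> 1 1
        - 2 * ?c * \<alpha> * (phase \<nu> 1 0 + phase \<nu> 1 1) * E {2..n}) + 2 * ?c * (\<alpha> * \<beta> T)"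
      by (simp add: R_def algebra_simps)
  qed
  moreover have "(\<Sum>T\<in>Pow {2..n}. ?w T * (2 * ?c * (\<alpha> * \<beta> T))) = 2 * ?c * Kfun \<nu> (n - 1) (p_pm \<nu> 1) (\<lambda>i. \<theta> (i + 1))"
    unfolding Kfun_shift[OF assms(1) local_family_p_pm] p_pm_shift[OF assms(1)] \<alpha>_def \<beta>_def
    by (simp add: sum_distrib_left algebra_simps)
  ultimately show ?thesis
    by (simp add: mult.assoc mult.left_commute)
qed

lemma decays_Kfun_p_pm_minus:
  assumes "n \<ge> 2" "\<And>i j. 2 \<le> i \<Longrightarrow> i < j \<Longrightarrow> j \<le> n \<Longrightarrow> sinh (\<theta> i - \<theta> j) \<noteq> 0"
  shows "decays 1 (\<lambda>x. Kfun \<nu> n (p_pm \<nu> (- 1)) (\<theta>(1 := x))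
    - complex_of_real (- 1) * 2 * \<i> * complex_of_real (sin (pi * \<nu>)) * Kfun \<nu> (n - 1) (p_pm \<nu> (- 1)) (\<lambda>i. \<theta> (i + 1)))"
proof -
  let ?w = "Kweight (coupling \<nu>) \<theta> {2..n}" and ?c = "coupling \<nu>"
  define \<alpha> where "\<alpha> = (\<Sum>i\<in>{2..n}. exp (\<theta> i))"
  define \<beta> where "\<beta> T = (\<Sum>i\<in>{2..n}. exp (- \<theta> i) * phase \<nu> (- 1) (indicator T i))" for T :: "nat set"
  define R where "R T x = (\<beta> T - \<beta> T) * exp x
      + (phase \<nu> (- 1) 0 + \<alpha> * \<beta> T) - (phase \<nu> (- 1) 1 + \<alpha> * \<beta> T)
      - 2 * ?c * (\<beta> T * (\<Sum>t\<in>T. exp (\<theta> t)) + \<beta> T * (\<Sum>t\<in>{2..n} - T. exp (\<theta> t)))" for T x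
  have p: "p_pm \<nu> (- 1) n (\<theta>(1 := x)) (indicator S)
      = (exp x + \<alpha>) * (exp (- x) * phase \<nu> (- 1) (indicator S 1) + \<beta> S)" for S x
    unfolding p_pm_update_first[OF assms(1)] \<alpha>_def \<beta>_def by simp
  have \<beta>_insert: "\<beta> (insert 1 T) = \<beta> T" for T
    unfolding \<beta>_def by (intro sum.cong refl) (auto simp: indicator_def)
  have "decays 1 (\<lambda>x. Kfun \<nu> n (p_pm \<nu> (- 1)) (\<theta>(1 := x)) - (\<Sum>T\<in>Pow {2..n}. ?w T * R T x))"
    unfolding R_def
  proof (rule decays_Kfun_update_first[OF assms(1) local_family_p_pm])
    fix T assume "T \<subseteq> {2..n}"
    then have "indicator T 1 = (0::nat)"
      by (auto simp: indicator_def)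
    then show "decays 1 (\<lambda>x. p_pm \<nu> (- 1) n (\<theta>(1 := x)) (indicator T) - (\<beta> T * exp x + (phase \<nu> (- 1) 0 + \<alpha> * \<beta> T)))"
      unfolding p by (simp only: decays_exp_product_remainder)
    have "indicator (insert 1 T) 1 = (1::nat)"
      by simp
    then show "decays 1 (\<lambda>x. p_pm \<nu> (- 1) n (\<theta>(1 := x)) (indicator (insert 1 T)) - (\<beta> T * exp x + (phase \<nu> (- 1) 1 + \<alpha> * \<beta> T)))"
      unfolding p \<beta>_insert by (simp only: decays_exp_product_remainder)
  qed
  moreover have "(\<Sum>T\<in>Pow {2..n}. ?w T * R T x) = (\<Sum>T\<in>Pow {2..n}. ?w T * (- 2 * ?c * (\<alpha> * \<beta> T)))" for x
  proof (rule sum_mult_affine[OF sum_Kweight_eq_0_ordered[OF assms]])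
    fix T assume "T \<in> Pow {2..n}"
    then have "\<alpha> = (\<Sum>t\<in>T. exp (\<theta> t)) + (\<Sum>t\<in>{2..n} - T. exp (\<theta> t))"
      unfolding \<alpha>_def by (simp add: sum.subset_diff)
    then show "R T x = (phase \<nu> (- 1) 0 - phase \<nu> (- 1) 1) + - 2 * ?c * (\<alpha> * \<beta> T)"
      by (simp add: R_def algebra_simps)
  qed
  moreover have "(\<Sum>T\<in>Pow {2..n}. ?w T * (- 2 * ?c * (\<alpha> * \<beta> T)))
      = - 2 * ?c * Kfun \<nu> (n - 1) (p_pm \<nu> (- 1)) (\<lambda>i. \<theta> (i + 1))"
    unfolding Kfun_shift[OF assms(1) local_family_p_pm] p_pm_shift[OF assms(1)] \<alpha>_def \<beta>_def
    by (simp add: sum_distrib_left algebra_simps)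
  ultimately show ?thesis
    by (simp add: mult.assoc mult.left_commute)
qed

theorem lemma3:
  fixes \<nu> :: real and n N :: nat and q :: complex and \<theta> :: "nat \<Rightarrow> complex"
  assumes "0 < \<nu>" "\<nu> < 1" "n \<ge> 2" "q \<noteq> 0"
    and "\<And>i j. 2 \<le> i \<Longrightarrow> i < j \<Longrightarrow> j \<le> n \<Longrightarrow> sinh (\<theta> i - \<theta> j) \<noteq> 0"
  shows
   "(\<lambda>x. Kfun \<nu> n (p_q q) (\<theta>(1 := x))
          - Kfun \<nu> 1 (p_q q) (\<theta>(1 := x)) * Kfun \<nu> (n - 1) (p_q q) (\<lambda>i. \<theta> (i + 1)))
      \<in> O[filtercomap Re at_top](\<lambda>x. complex_of_real (exp (- Re x)))
    \<and> (\<lambda>x. Kfun \<nu> n (p_N N) (\<theta>(1 := x))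
          - (\<Sum>k\<in>{1..N - 1}. of_nat (N choose k) * Kfun \<nu> 1 (p_N k) (\<theta>(1 := x))
                                 * Kfun \<nu> (n - 1) (p_N (N - k)) (\<lambda>i. \<theta> (i + 1))))
      \<in> O[filtercomap Re at_top](\<lambda>x. complex_of_real (exp (- Re x)))
    \<and> (\<forall>s\<in>{1, -1::real}.
        (\<lambda>x. Kfun \<nu> n (p_pm \<nu> s) (\<theta>(1 := x))
          - complex_of_real s * 2 * \<i> * complex_of_real (sin (pi * \<nu>))
              * Kfun \<nu> (n - 1) (p_pm \<nu> s) (\<lambda>i. \<theta> (i + 1)))
        \<in> O[filtercomap Re at_top](\<lambda>x. complex_of_real (exp (- Re x))))
    \<and> (\<exists>c. \<forall>\<theta>'. Kfun \<nu> 1 (p_N 1) \<theta>' = c)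
    \<and> (\<lambda>x. Kfun \<nu> n (p_N 1) (\<theta>(1 := x)))
        \<in> O[filtercomap Re at_top](\<lambda>x. complex_of_real (exp (- Re x)))"
proof -
  have N: "decays 1 (\<lambda>x. Kfun \<nu> n (p_N N') (\<theta>(1 := x))
      - (\<Sum>k\<in>{1..N' - 1}. of_nat (N' choose k) * Kfun \<nu> 1 (p_N k) (\<theta>(1 := x))
          * Kfun \<nu> (n - 1) (p_N (N' - k)) (\<lambda>i. \<theta> (i + 1))))" for N'
    by (rule decays_Kfun_p_N[OF assms(3,5)])
  have "\<forall>s\<in>{1, -1::real}. decays 1 (\<lambda>x. Kfun \<nu> n (p_pm \<nu> s) (\<theta>(1 := x))
      - complex_of_real s * 2 * \<i> * complex_of_real (sin (pi * \<nu>)) * Kfun \<nu> (n - 1) (p_pm \<nu> s) (\<lambda>i. \<theta> (i + 1)))"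
    using decays_Kfun_p_pm_plus[OF assms(3,5)] decays_Kfun_p_pm_minus[OF assms(3,5)] by auto
  moreover have "Kfun \<nu> 1 (p_N 1) \<theta>' = 2" for \<theta>'
    unfolding Kfun_one_p_N by simp
  ultimately show ?thesis
    using decays_Kfun_p_q[OF assms(3)] N[of N] N[of 1] by (auto intro!: decays_imp_bigo)
qed

end
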